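(* Let $F,G\in\mathcal{D}_0$ with $F \leftrightarrow (A,(x_j,p_j)_{j\in A})$ and $G\leftrightarrow (B,(y_j,q_j)_{j\in B})$. If $F\le_{\wedge\text{-disc}} G$, then $F\le_{wd} G$, i.e. $Q_X(\varepsilon)\ge Q_Y(\varepsilon)$ for all $\varepsilon>0$, where $X\sim F$, $Y\sim G$.
   Context: For a real random variable $X$, its Lévy concentration function is $Q_X(\varepsilon)=\sup_{x_0\in\mathbb{R}}\Pr\{X\in[x_0,x_0+\varepsilon]\}$, $\varepsilon>0$. For random variables $X,Y$ (or their distribution functions), write $X\le_{wd}Y$ if $Q_X(\varepsilon)\ge Q_Y(\varepsilon)$ for all $\varepsilon>0$. $\mathcal{D}_0$ is the set of discrete distributions $F$ on $\mathbb{R}$ whose support is order-isomorphic to a subset of $\mathbb{Z}$ with at least two elements. For $F\in\mathcal{D}_0$ there is a unique index set $A\in\{\mathbb{Z},\mathbb{N},-\mathbb{N}\}\cup\{\{1,\dots,n\}:n\ge 2\}$ order-isomorphic to $\operatorname{supp}(F)$ and a unique sequence $(x_j,p_j)_{j\in A}$ with $x_i<x_j$ for $i<j$, $p_j>0$, $\sum_{j\in A}p_j=1$, $\Pr(X=x_j)=p_j$ for $X\sim F$, where in the case $A=\mathbb{Z}$ the indexing is normalized by $\inf\{j\in\mathbb{Z}:\sum_{i\le j}p_i\ge 1/2\}=0$; this is written $F\leftrightarrow(A,(x_j,p_j)_{j\in A})$. Conventions: $x_a=-\infty$, $F(x_a)=0$ for $a<\min A$, and $x_a=+\infty$, $F(x_a)=1$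 for $a>\max A$ (when these exist); similarly for $G$. Let $A^\circ=A\setminus\{\min A\}$ (and $A^\circ=A$ if $A$ has no minimum), similarly $B^\circ$. For $a\in A,b\in B$ write $a\sim b$ iff $(F(x_{a-1}),F(x_a))\cap(G(y_{b-1}),G(y_b))\neq\emptyset$. For $a\in A^\circ,b\in B^\circ$ write $a\sim_\wedge b$ iff $a\sim b$ and $a-1\sim b-1$. Define $F\le_{\wedge\text{-disc}}G$ ("$G$ is at least as $\wedge$-discretely dispersed as $F$") iff (i) $q_b\le p_a$ for all $(a,b)\in A\times B$ with $a\sim b$, and (ii) $x_a-x_{a-1}\le y_b-y_{b-1}$ for all $(a,b)\in A^\circ\times B^\circ$ with $a\sim_\wedge b$. *)

theory Defs
  imports "HOL-Probability.Probability"
begin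

definition conc :: "real pmf \<Rightarrow> real \<Rightarrow> real" where
  "conc F eps = (SUP x0. measure_pmf.prob F {x0..x0 + eps})"

definition wd_le :: "real pmf \<Rightarrow> real pmf \<Rightarrow> bool" where
  "wd_le F G \<longleftrightarrow> (\<forall>eps>0. conc F eps \<ge> conc G eps)"

definition admissible_index :: "int set \<Rightarrow> bool" where
  "admissible_index A \<longleftrightarrow> A = UNIV \<or> A = {1..} \<or> A = {..-1} \<or> (\<exists>n\<ge>2. A = {1..n})"

text \<open>F corresponds to (A, (x_j, p_j)_{j in A}); this also encodes F \<in> D_0.\<close>
definition represents :: "real pmf \<Rightarrow> int set \<Rightarrow> (int \<Rightarrow> real) \<Rightarrow> (int \<Rightarrow> real) \<Rightarrow> bool" where
  "represents F A x p \<longleftrightarrow>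
     admissible_index A \<and>
     strict_mono_on A x \<and>
     (\<forall>j\<in>A. p j > 0) \<and>
     (p has_sum 1) A \<and>
     (\<forall>j\<in>A. pmf F (x j) = p j) \<and>
     set_pmf F = x ` A \<and>
     (A = UNIV \<longrightarrow> measure_pmf.prob F {..x 0} \<ge> 1/2 \<and> measure_pmf.prob F {..x (-1)} < 1/2)"

definition cdf_at :: "real pmf \<Rightarrow> int set \<Rightarrow> (int \<Rightarrow> real) \<Rightarrow> int \<Rightarrow> real" where
  "cdf_at F A x a =
     (if a \<in> A then measure_pmf.prob F {..x a}
      else if (\<forall>i\<in>A. a < i) then 0 else 1)"

definition circ :: "int set \<Rightarrow> int set" where
  "circ A = {a \<in> A. \<not> (\<forall>i\<in>A. a \<le> i)}"

definition idx_sim ::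
  "real pmf \<Rightarrow> int set \<Rightarrow> (int \<Rightarrow> real) \<Rightarrow> real pmf \<Rightarrow> int set \<Rightarrow> (int \<Rightarrow> real) \<Rightarrow> int \<Rightarrow> int \<Rightarrow> bool" where
  "idx_sim F A x G B y a b \<longleftrightarrow>
     {cdf_at F A x (a - 1)<..<cdf_at F A x a} \<inter> {cdf_at G B y (b - 1)<..<cdf_at G B y b} \<noteq> {}"

definition wedge_disc_le ::
  "real pmf \<Rightarrow> int set \<Rightarrow> (int \<Rightarrow> real) \<Rightarrow> (int \<Rightarrow> real) \<Rightarrow>
   real pmf \<Rightarrow> int set \<Rightarrow> (int \<Rightarrow> real) \<Rightarrow> (int \<Rightarrow> real) \<Rightarrow> bool" where
  "wedge_disc_le F A x p G B y q \<longleftrightarrow>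
     (\<forall>a\<in>A. \<forall>b\<in>B. idx_sim F A x G B y a b \<longrightarrow> q b \<le> p a) \<and>
     (\<forall>a\<in>circ A. \<forall>b\<in>circ B.
        idx_sim F A x G B y a b \<and> idx_sim F A x G B y (a - 1) (b - 1) \<longrightarrow>
        x a - x (a - 1) \<le> y b - y (b - 1))"

end

theory Submission
  imports Defs
begin

text \<open>
  Call the interval between F(x_{a-1}) and F(x_a) the a-th F-cell, and similarly for G.
  Condition (i) says that no F-cell lies strictly inside a G-cell. Hence, as b increases,
  the index of the F-cell containing G(y_b) (or G(y_{b-1})) increases by 0 or 1 at each step,
  and each unit step is diagonal, so condition (ii) bounds the x-gap by the y-gap.
  This gives, for G-indices b1 \<le> b2, F-indices a, a' with x_{a'} - x_a \<le> y_{b2} - y_{b1} whose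
  F-mass dominates the G-mass of [y_{b1}, y_{b2}]. If some G-cell in between lies inside a single
  F-cell, take the F-cells containing the two outer ends; otherwise every G-cell straddles
  an F-boundary, so the F-cells containing the right ends are pairwise distinct and each
  carries at least the mass of its G-cell. Every window of length \<epsilon> is exhausted by such blocks.
\<close>

lemma exists_step_crossing:
  fixes f :: "int \<Rightarrow> 'a::linorder"
  assumes "m \<le> n" and "f m < u" and "u \<le> f n"
  shows "\<exists>k. f (k - 1) < u \<and> u \<le> f k"
  using assms(1,3)
proof (induction n rule: int_ge_induct)
  case base
  then show ?case using assms(2) by simp
next
  case (step n)
  then show ?case
    by (cases "u \<le> f n") (auto intro!: exI[of _ "n + 1"])
qed

lemma prob_Icc_le_conc: "measure_pmf.prob F {z..z + eps} \<le> conc F eps"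
  unfolding conc_def by (rule cSUP_upper) (auto intro: bdd_aboveI[of _ 1])

lemma measure_pmf_le_of_finite_subsets:
  assumes "\<And>S. finite S \<Longrightarrow> S \<subseteq> W \<Longrightarrow> measure_pmf.prob M S \<le> c"
  shows "measure_pmf.prob M W \<le> c"
proof -
  have "measure_pmf.prob M W = infsum (pmf M) W"
    by (simp add: measure_pmf_conv_infsetsum infsetsum_infsum[OF pmf_abs_summable])
  also have "\<dots> \<le> c"
  proof (rule infsum_le_finite_sums)
    show "pmf M summable_on W"
      using abs_summable_equivalent pmf_abs_summable abs_summable_summable by blast
    show "sum (pmf M) S \<le> c" if "finite S" "S \<subseteq> W" for S
      using assms[OF that] that(1) by (simp add: measure_measure_pmf_finite)
  qed
  finally show ?thesis .
qed

locale discrete_repr =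
  fixes F :: "real pmf" and A :: "int set" and x p :: "int \<Rightarrow> real"
  assumes represents: "represents F A x p"
begin

abbreviation cdf :: "int \<Rightarrow> real" where
  "cdf \<equiv> cdf_at F A x"

lemma index_convex: "i \<in> A \<Longrightarrow> k \<in> A \<Longrightarrow> i \<le> j \<Longrightarrow> j \<le> k \<Longrightarrow> j \<in> A"
  using represents unfolding represents_def admissible_index_def by auto

lemma x_le_iff: "i \<in> A \<Longrightarrow> j \<in> A \<Longrightarrow> x i \<le> x j \<longleftrightarrow> i \<le> j"
  using represents strict_mono_onD[of A x i j] strict_mono_onD[of A x j i]
  unfolding represents_def by (cases i j rule: linorder_cases) auto

lemma inj_on_x: "inj_on x A"
  using represents strict_mono_on_imp_inj_on unfolding represents_def by blast

lemma set_pmf_eq: "set_pmf F = x ` A"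
  using represents unfolding represents_def by blast

lemma cdf_eq_prob: "cdf a = measure_pmf.prob F (x ` {j \<in> A. j \<le> a})"
proof -
  have whole: "measure_pmf.prob F (x ` A) = 1"
    using measure_Int_set_pmf[of F UNIV] by (simp add: set_pmf_eq)
  consider "a \<in> A" | "a \<notin> A" "\<forall>i\<in>A. a < i" | "a \<notin> A" "\<exists>i\<in>A. i \<le> a"
    by force
  then show ?thesis
  proof cases
    case 1
    then have "{..x a} \<inter> set_pmf F = x ` {j \<in> A. j \<le> a}"
      by (auto simp: set_pmf_eq x_le_iff)
    then show ?thesis
      using 1 measure_Int_set_pmf[of F "{..x a}"] by (simp add: cdf_at_def)
  next
    case 2
    then have "{j \<in> A. j \<le> a} = {}" by force
    with 2 show ?thesis by (simp add: cdf_at_def del: Collect_empty_eq)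
  next
    case 3
    then obtain i where "i \<in> A" "i \<le> a" by blast
    then have "j \<le> a" if "j \<in> A" for j
      using that 3(1) index_convex linorder_le_cases by meson
    then have "{j \<in> A. j \<le> a} = A" by blast
    with 3 whole show ?thesis by (auto simp: cdf_at_def not_less)
  qed
qed

lemma cdf_mono: "a \<le> b \<Longrightarrow> cdf a \<le> cdf b"
  unfolding cdf_eq_prob by (intro measure_pmf.finite_measure_mono) auto

lemma cdf_bounds: "0 \<le> cdf a" "cdf a \<le> 1"
  unfolding cdf_eq_prob by simp_all

lemma less_of_cdf_less: "cdf i < cdf j \<Longrightarrow> i < j"
  using cdf_mono[of j i] by linarith

lemma cdf_pred_eq: "a \<notin> A \<Longrightarrow> cdf (a - 1) = cdf a"
proof -
  assume "a \<notin> A"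
  then have "{j \<in> A. j \<le> a - 1} = {j \<in> A. j \<le> a}"
    by (metis (lifting) int_one_le_iff_zero_less le_diff_eq order_le_less zle_diff1_eq)
  then show ?thesis unfolding cdf_eq_prob by (simp only:)
qed

lemma cdf_pred_eq_0: "a \<in> A \<Longrightarrow> a - 1 \<notin> A \<Longrightarrow> cdf (a - 1) = 0"
proof -
  assume "a \<in> A" "a - 1 \<notin> A"
  then have "{j \<in> A. j \<le> a - 1} = {}"
    using index_convex[of _ a "a - 1"] by force
  then show ?thesis unfolding cdf_eq_prob by (simp only: image_empty measure_empty)
qed

lemma cdf_eq_1: "a \<in> A \<Longrightarrow> a + 1 \<notin> A \<Longrightarrow> cdf a = 1"
proof -
  assume "a \<in> A" "a + 1 \<notin> A"
  then have "{j \<in> A. j \<le> a} = A"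
    using index_convex[of a _ "a + 1"] by force
  then show ?thesis
    unfolding cdf_eq_prob using measure_Int_set_pmf[of F UNIV] by (simp add: set_pmf_eq)
qed

lemma prob_Icc_eq:
  assumes "a \<in> A" "a' \<in> A" "a \<le> a'"
  shows "measure_pmf.prob F {x a..x a'} = cdf a' - cdf (a - 1)"
proof -
  let ?L = "{j \<in> A. j \<le> a - 1}" and ?M = "{j \<in> A. a \<le> j \<and> j \<le> a'}"
  have "{x a..x a'} \<inter> set_pmf F = x ` ?M"
    using assms by (auto simp: set_pmf_eq x_le_iff)
  then have "measure_pmf.prob F {x a..x a'} = measure_pmf.prob F (x ` ?M)"
    by (metis measure_Int_set_pmf)
  moreover have "{j \<in> A. j \<le> a'} = ?L \<union> ?M"
    using assms by auto
  moreover have "x ` ?L \<inter> x ` ?M = {}"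
    using inj_on_image_Int[OF inj_on_x, of ?L ?M] by auto
  ultimately show ?thesis
    unfolding cdf_eq_prob using measure_pmf.finite_measure_Union[where A = "x ` ?L" and B = "x ` ?M"]
    by (simp add: image_Un)
qed

lemma cdf_diff_le_prob_Icc:
  assumes "a \<in> A" "a' \<in> A"
  shows "cdf a' - cdf (a - 1) \<le> measure_pmf.prob F {x a..x a'}"
proof (cases "a \<le> a'")
  case False
  then show ?thesis
    using cdf_mono[of a' "a - 1"] measure_nonneg[of "measure_pmf F" "{x a..x a'}"] by linarith
qed (simp add: assms prob_Icc_eq)

lemma cdf_jump: "a \<in> A \<Longrightarrow> cdf a - cdf (a - 1) = p a"
  using prob_Icc_eq[of a a] represents measure_pmf_single[of F "x a"]
  unfolding represents_def by simp

lemma cdf_pred_less: "a \<in> A \<Longrightarrow> cdf (a - 1) < cdf a"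
  using cdf_jump represents unfolding represents_def by fastforce

lemma cdf_tendsto_1: "(\<lambda>n. cdf (int n)) \<longlonglongrightarrow> 1"
proof -
  have "(\<Union>n. x ` {j \<in> A. j \<le> int n}) = x ` A"
  proof (intro equalityI subsetI)
    fix z assume "z \<in> x ` A"
    then obtain j where "j \<in> A" "z = x j" by blast
    then have "z \<in> x ` {j \<in> A. j \<le> int (nat j)}" by (auto simp: int_nat_eq)
    then show "z \<in> (\<Union>n. x ` {j \<in> A. j \<le> int n})" by blast
  qed auto
  moreover have "(\<lambda>n. measure_pmf.prob F (x ` {j \<in> A. j \<le> int n}))
      \<longlonglongrightarrow> measure_pmf.prob F (\<Union>n. x ` {j \<in> A. j \<le> int n})"
    by (rule measure_pmf.finite_Lim_measure_incseq) (auto simp: incseq_def)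
  ultimately show ?thesis
    using measure_Int_set_pmf[of F UNIV] by (simp add: cdf_eq_prob set_pmf_eq)
qed

lemma cdf_tendsto_0: "(\<lambda>n. cdf (- int n)) \<longlonglongrightarrow> 0"
proof -
  have "(\<Inter>n. {j \<in> A. j \<le> - int n}) = {}"
  proof (intro equalityI subsetI)
    fix j assume "j \<in> (\<Inter>n. {j \<in> A. j \<le> - int n})"
    then have "j \<le> - int (nat (1 - j))" by blast
    then show "j \<in> {}" by (simp add: int_nat_eq split: if_splits)
  qed auto
  then have "(\<Inter>n. x ` {j \<in> A. j \<le> - int n}) = {}"
    using image_INT[OF inj_on_x, of UNIV "\<lambda>n. {j \<in> A. j \<le> - int n}"] by auto
  moreover have "(\<lambda>n. measure_pmf.prob F (x ` {j \<in> A. j \<le> - int n}))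
      \<longlonglongrightarrow> measure_pmf.prob F (\<Inter>n. x ` {j \<in> A. j \<le> - int n})"
    by (rule measure_pmf.finite_Lim_measure_decseq) (auto simp: decseq_def)
  ultimately show ?thesis by (simp add: cdf_eq_prob)
qed

lemma quantile_idx_exists:
  assumes "0 < u" and "u < 1"
  shows "\<exists>a\<in>A. cdf (a - 1) < u \<and> u \<le> cdf a"
proof -
  have "\<forall>\<^sub>F n in sequentially. u < cdf (int n)"
    using cdf_tendsto_1 assms(2) by (rule order_tendstoD)
  then obtain n where n: "u < cdf (int n)"
    using eventually_happens'[OF sequentially_bot] by blast
  have "\<forall>\<^sub>F m in sequentially. cdf (- int m) < u"
    using cdf_tendsto_0 assms(1) by (rule order_tendstoD)
  then obtain m where m: "cdf (- int m) < u"
    using eventually_happens'[OF sequentially_bot] by blast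
  have "- int m \<le> int n"
    using less_of_cdf_less[of "- int m" "int n"] n m by simp
  then obtain a where a: "cdf (a - 1) < u" "u \<le> cdf a"
    using exists_step_crossing[of "- int m" "int n" cdf u] n m by auto
  moreover have "a \<in> A"
    using a cdf_pred_eq by force
  ultimately show ?thesis by blast
qed

definition quantile_idx :: "real \<Rightarrow> int" where
  "quantile_idx u = (THE a. a \<in> A \<and> cdf (a - 1) < u \<and> u \<le> cdf a)"

definition quantile_idx_plus :: "real \<Rightarrow> int" where
  "quantile_idx_plus u = (THE a. a \<in> A \<and> cdf (a - 1) \<le> u \<and> u < cdf a)"

lemma quantile_idx_eqI:
  assumes "a \<in> A" "cdf (a - 1) < u" "u \<le> cdf a"
  shows "quantile_idx u = a"
  unfolding quantile_idx_def
proof (rule the_equality)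
  fix a' assume "a' \<in> A \<and> cdf (a' - 1) < u \<and> u \<le> cdf a'"
  then have "a' - 1 < a" "a - 1 < a'"
    using assms by (auto intro!: less_of_cdf_less)
  then show "a' = a" by simp
qed (use assms in simp)

lemma quantile_idx_plus_eqI:
  assumes "a \<in> A" "cdf (a - 1) \<le> u" "u < cdf a"
  shows "quantile_idx_plus u = a"
  unfolding quantile_idx_plus_def
proof (rule the_equality)
  fix a' assume "a' \<in> A \<and> cdf (a' - 1) \<le> u \<and> u < cdf a'"
  then have "a' - 1 < a" "a - 1 < a'"
    using assms by (auto intro!: less_of_cdf_less)
  then show "a' = a" by simp
qed (use assms in simp)

end

locale wedge_disc_pair = F: discrete_repr F A x p + G: discrete_repr G B y q
  for F :: "real pmf" and A x p and G :: "real pmf" and B y q +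
  assumes wedge: "wedge_disc_le F A x p G B y q"
begin

abbreviation sim :: "int \<Rightarrow> int \<Rightarrow> bool" (infix "\<sim>" 50) where
  "a \<sim> b \<equiv> idx_sim F A x G B y a b"

lemma idx_simI:
  assumes "a \<in> A" "b \<in> B" "F.cdf (a - 1) < G.cdf b" "G.cdf (b - 1) < F.cdf a"
  shows "a \<sim> b"
  using assms F.cdf_pred_less[OF assms(1)] G.cdf_pred_less[OF assms(2)]
  unfolding idx_sim_def by (auto simp: dense)

lemma G_jump_le_F_jump:
  assumes "a \<sim> b" "a \<in> A" "b \<in> B"
  shows "G.cdf b - G.cdf (b - 1) \<le> F.cdf a - F.cdf (a - 1)"
  using wedge assms F.cdf_jump G.cdf_jump unfolding wedge_disc_le_def by auto

lemma x_gap_le_y_gap: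
  assumes "a - 1 \<sim> b - 1" "a \<sim> b" "a - 1 \<in> A" "a \<in> A" "b - 1 \<in> B" "b \<in> B"
  shows "x a - x (a - 1) \<le> y b - y (b - 1)"
proof -
  have "a \<in> circ A" "b \<in> circ B"
    using assms unfolding circ_def by force+
  then show ?thesis
    using wedge assms(1,2) unfolding wedge_disc_le_def by blast
qed

lemma F_cell_within_G_cell_eq:
  assumes "a \<in> A" "b \<in> B" "G.cdf (b - 1) \<le> F.cdf (a - 1)" "F.cdf a \<le> G.cdf b"
  shows "F.cdf (a - 1) = G.cdf (b - 1)" "F.cdf a = G.cdf b"
proof -
  have "a \<sim> b"
    using assms F.cdf_pred_less[OF assms(1)] by (intro idx_simI) auto
  then show "F.cdf (a - 1) = G.cdf (b - 1)" "F.cdf a = G.cdf b"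
    using G_jump_le_F_jump[OF _ assms(1,2)] assms(3,4) by linarith+
qed

lemma exists_F_cell_meeting_G_cell:
  assumes "b \<in> B"
  shows "\<exists>a\<in>A. F.cdf (a - 1) < G.cdf b \<and> G.cdf (b - 1) < F.cdf a"
proof -
  define m where "m = (G.cdf (b - 1) + G.cdf b) / 2"
  have m: "G.cdf (b - 1) < m" "m < G.cdf b"
    using G.cdf_pred_less[OF assms] by (auto simp: m_def)
  then have "0 < m" "m < 1"
    using G.cdf_bounds[of "b - 1"] G.cdf_bounds[of b] by linarith+
  then obtain a where "a \<in> A" "F.cdf (a - 1) < m" "m \<le> F.cdf a"
    using F.quantile_idx_exists by blast
  with m show ?thesis by force
qed

lemma exists_F_cell_containing_G_cdf:
  assumes "b \<in> B"
  shows "\<exists>a\<in>A. F.cdf (a - 1) < G.cdf b \<and> G.cdf b \<le> F.cdf a"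
proof -
  obtain a where a: "a \<in> A" "F.cdf (a - 1) < G.cdf b" "G.cdf (b - 1) < F.cdf a"
    using exists_F_cell_meeting_G_cell[OF assms] by blast
  show ?thesis
  proof (cases "G.cdf b \<le> F.cdf a")
    case False
    then have "a + 1 \<in> A"
      using a F.cdf_eq_1 G.cdf_bounds(2)[of b] by force
    moreover have "G.cdf b \<le> F.cdf (a + 1)"
      using F_cell_within_G_cell_eq(2)[OF \<open>a + 1 \<in> A\<close> assms] a
      by (cases "G.cdf b \<le> F.cdf (a + 1)") auto
    ultimately show ?thesis
      using False by force
  qed (use a in blast)
qed

lemma exists_F_cell_containing_G_pred_cdf:
  assumes "b \<in> B"
  shows "\<exists>a\<in>A. F.cdf (a - 1) \<le> G.cdf (b - 1) \<and> G.cdf (b - 1) < F.cdf a"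
proof -
  obtain a where a: "a \<in> A" "F.cdf (a - 1) < G.cdf b" "G.cdf (b - 1) < F.cdf a"
    using exists_F_cell_meeting_G_cell[OF assms] by blast
  show ?thesis
  proof (cases "F.cdf (a - 1) \<le> G.cdf (b - 1)")
    case False
    then have "a - 1 \<in> A"
      using a F.cdf_pred_eq_0 G.cdf_bounds(1)[of "b - 1"] by force
    moreover have "F.cdf (a - 1 - 1) \<le> G.cdf (b - 1)"
      using F_cell_within_G_cell_eq(1)[OF \<open>a - 1 \<in> A\<close> assms] a
      by (cases "F.cdf (a - 1 - 1) \<le> G.cdf (b - 1)") auto
    ultimately show ?thesis
      using False by (intro bexI[of _ "a - 1"]) auto
  qed (use a in blast)
qed

text \<open>
  The F-cells containing the right and the left end of the b-th G-cell. F-cells are closed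
  on the right; for the left end the cell is taken closed on the left, so that it meets the
  G-cell.
\<close>

abbreviation right_idx :: "int \<Rightarrow> int" where
  "right_idx b \<equiv> F.quantile_idx (G.cdf b)"

abbreviation left_idx :: "int \<Rightarrow> int" where
  "left_idx b \<equiv> F.quantile_idx_plus (G.cdf (b - 1))"

lemma right_idx_cell:
  assumes "b \<in> B"
  shows "right_idx b \<in> A" "F.cdf (right_idx b - 1) < G.cdf b" "G.cdf b \<le> F.cdf (right_idx b)"
proof -
  obtain a where "a \<in> A" "F.cdf (a - 1) < G.cdf b" "G.cdf b \<le> F.cdf a"
    using exists_F_cell_containing_G_cdf[OF assms] by blast
  moreover from this have "right_idx b = a"
    by (rule F.quantile_idx_eqI)
  ultimately show "right_idx b \<in> A" "F.cdf (right_idx b - 1) < G.cdf b" "G.cdf b \<le> F.cdf (right_idx b)"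
    by simp_all
qed

lemma left_idx_cell:
  assumes "b \<in> B"
  shows "left_idx b \<in> A" "F.cdf (left_idx b - 1) \<le> G.cdf (b - 1)" "G.cdf (b - 1) < F.cdf (left_idx b)"
proof -
  obtain a where "a \<in> A" "F.cdf (a - 1) \<le> G.cdf (b - 1)" "G.cdf (b - 1) < F.cdf a"
    using exists_F_cell_containing_G_pred_cdf[OF assms] by blast
  moreover from this have "left_idx b = a"
    by (rule F.quantile_idx_plus_eqI)
  ultimately show "left_idx b \<in> A" "F.cdf (left_idx b - 1) \<le> G.cdf (b - 1)" "G.cdf (b - 1) < F.cdf (left_idx b)"
    by simp_all
qed

lemma right_idx_sim: "b \<in> B \<Longrightarrow> right_idx b \<sim> b"
  using right_idx_cell[of b] G.cdf_pred_less[of b] by (intro idx_simI) auto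

lemma left_idx_sim: "b \<in> B \<Longrightarrow> left_idx b \<sim> b"
  using left_idx_cell[of b] G.cdf_pred_less[of b] by (intro idx_simI) auto

lemma right_idx_step:
  assumes "b - 1 \<in> B" "b \<in> B"
  shows "right_idx (b - 1) \<le> right_idx b \<and> right_idx b \<le> right_idx (b - 1) + 1"
proof
  let ?a = "right_idx (b - 1)" and ?a' = "right_idx b"
  have "F.cdf (?a - 1) < F.cdf ?a'"
    using right_idx_cell[OF assms(1)] right_idx_cell[OF assms(2)] G.cdf_pred_less[OF assms(2)]
    by linarith
  then show "?a \<le> ?a'"
    using F.less_of_cdf_less by fastforce
  show "?a' \<le> ?a + 1"
  proof (rule ccontr)
    assume "\<not> ?a' \<le> ?a + 1"
    then have "?a + 1 \<in> A"
      using F.index_convex[of ?a ?a' "?a + 1"] right_idx_cell(1)[OF assms(1)] right_idx_cell(1)[OF assms(2)]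
      by simp
    moreover have "F.cdf (?a + 1) < G.cdf b"
      using F.cdf_mono[of "?a + 1" "?a' - 1"] right_idx_cell(2)[OF assms(2)] \<open>\<not> ?a' \<le> ?a + 1\<close>
      by simp
    ultimately show False
      using F_cell_within_G_cell_eq(2)[of "?a + 1" b] right_idx_cell(3)[OF assms(1)] assms(2)
      by simp
  qed
qed

lemma left_idx_step:
  assumes "b - 1 \<in> B" "b \<in> B"
  shows "left_idx (b - 1) \<le> left_idx b \<and> left_idx b \<le> left_idx (b - 1) + 1"
proof
  let ?a = "left_idx (b - 1)" and ?a' = "left_idx b"
  have "F.cdf (?a - 1) < F.cdf ?a'"
    using left_idx_cell[OF assms(1)] left_idx_cell[OF assms(2)] G.cdf_pred_less[OF assms(1)]
    by linarith
  then show "?a \<le> ?a'"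
    using F.less_of_cdf_less by fastforce
  show "?a' \<le> ?a + 1"
  proof (rule ccontr)
    assume "\<not> ?a' \<le> ?a + 1"
    then have "?a + 1 \<in> A"
      using F.index_convex[of ?a ?a' "?a + 1"] left_idx_cell(1)[OF assms(1)] left_idx_cell(1)[OF assms(2)]
      by simp
    moreover have "F.cdf (?a + 1) \<le> G.cdf (b - 1)"
      using F.cdf_mono[of "?a + 1" "?a' - 1"] left_idx_cell(2)[OF assms(2)] \<open>\<not> ?a' \<le> ?a + 1\<close>
      by simp
    ultimately show False
      using F_cell_within_G_cell_eq(1)[of "?a + 1" "b - 1"] left_idx_cell(3)[OF assms(1)] assms(1)
      by simp
  qed
qed

lemma x_diff_le_y_diff_of_tracking:
  assumes tracks: "\<And>b. b \<in> B \<Longrightarrow> \<phi> b \<in> A \<and> \<phi> b \<sim> b"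
    and unit_steps: "\<And>b. b - 1 \<in> B \<Longrightarrow> b \<in> B \<Longrightarrow> \<phi> (b - 1) \<le> \<phi> b \<and> \<phi> b \<le> \<phi> (b - 1) + 1"
    and "b1 \<in> B" "b2 \<in> B" "b1 \<le> b2"
  shows "x (\<phi> b2) - x (\<phi> b1) \<le> y b2 - y b1"
  using \<open>b1 \<le> b2\<close> \<open>b2 \<in> B\<close>
proof (induction b2 rule: int_ge_induct)
  case (step b)
  have "b \<in> B"
    using G.index_convex[OF \<open>b1 \<in> B\<close> step.prems] step.hyps by simp
  have "x (\<phi> (b + 1)) - x (\<phi> b) \<le> y (b + 1) - y b"
  proof -
    consider "\<phi> (b + 1) = \<phi> b" | "\<phi> (b + 1) = \<phi> b + 1"
      using unit_steps[of "b + 1"] \<open>b \<in> B\<close> step.prems by force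
    then show ?thesis
    proof cases
      case 1
      then show ?thesis using G.x_le_iff[OF \<open>b \<in> B\<close> step.prems] by simp
    next
      case 2
      then show ?thesis
        using x_gap_le_y_gap[of "\<phi> (b + 1)" "b + 1"] tracks[OF \<open>b \<in> B\<close>] tracks[OF step.prems]
          \<open>b \<in> B\<close> step.prems
        by simp
    qed
  qed
  then show ?case
    using step.IH[OF \<open>b \<in> B\<close>] by simp
qed simp

lemma x_right_idx_diff_le:
  "b1 \<in> B \<Longrightarrow> b2 \<in> B \<Longrightarrow> b1 \<le> b2 \<Longrightarrow> x (right_idx b2) - x (right_idx b1) \<le> y b2 - y b1"
  by (rule x_diff_le_y_diff_of_tracking) (use right_idx_cell(1) right_idx_sim right_idx_step in blast)+

lemma x_left_idx_diff_le:
  "b1 \<in> B \<Longrightarrow> b2 \<in> B \<Longrightarrow> b1 \<le> b2 \<Longrightarrow> x (left_idx b2) - x (left_idx b1) \<le> y b2 - y b1"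
  by (rule x_diff_le_y_diff_of_tracking) (use left_idx_cell(1) left_idx_sim left_idx_step in blast)+

lemma G_mass_le_F_mass_of_separated:
  assumes b1: "b1 \<in> B" and b2: "b2 \<in> B" and "b1 \<le> b2"
    and separated: "\<And>b. b1 \<le> b \<Longrightarrow> b \<le> b2 \<Longrightarrow> left_idx b \<noteq> right_idx b"
  shows "G.cdf b2 - G.cdf (b1 - 1) \<le> F.cdf (right_idx b2) - F.cdf (right_idx b1 - 1)"
proof -
  have "G.cdf b - G.cdf (b1 - 1) \<le> F.cdf (right_idx b) - F.cdf (right_idx b1 - 1)"
    if "b1 \<le> b" "b \<le> b2" for b
    using that
  proof (induction b rule: int_ge_induct)
    case base
    show ?case
      using G_jump_le_F_jump[OF right_idx_sim[OF b1] right_idx_cell(1)[OF b1] b1] .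
  next
    case (step b)
    have "b \<in> B" "b + 1 \<in> B"
      using G.index_convex[OF b1 b2] step by auto
    have "G.cdf b < F.cdf (right_idx (b + 1) - 1)"
    proof (rule ccontr)
      assume "\<not> ?thesis"
      then have "left_idx (b + 1) = right_idx (b + 1)"
        using right_idx_cell[OF \<open>b + 1 \<in> B\<close>] G.cdf_pred_less[OF \<open>b + 1 \<in> B\<close>]
        by (intro F.quantile_idx_plus_eqI) auto
      then show False
        using separated[of "b + 1"] step by simp
    qed
    then have "right_idx b - 1 < right_idx (b + 1) - 1"
      using right_idx_cell(2)[OF \<open>b \<in> B\<close>] by (intro F.less_of_cdf_less) simp
    then have "F.cdf (right_idx b) \<le> F.cdf (right_idx (b + 1) - 1)"
      by (intro F.cdf_mono) simp
    moreover have "G.cdf (b + 1) - G.cdf b \<le> F.cdf (right_idx (b + 1)) - F.cdf (right_idx (b + 1) - 1)"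
      using G_jump_le_F_jump[OF right_idx_sim right_idx_cell(1)] \<open>b + 1 \<in> B\<close> by fastforce
    ultimately show ?case
      using step by simp
  qed
  then show ?thesis
    using \<open>b1 \<le> b2\<close> by simp
qed

lemma exists_F_block_dominating:
  assumes b1: "b1 \<in> B" and b2: "b2 \<in> B" and "b1 \<le> b2"
  shows "\<exists>a\<in>A. \<exists>a'\<in>A. x a' - x a \<le> y b2 - y b1 \<and>
    G.cdf b2 - G.cdf (b1 - 1) \<le> F.cdf a' - F.cdf (a - 1)"
proof (cases "\<exists>b. b1 \<le> b \<and> b \<le> b2 \<and> left_idx b = right_idx b")
  case True
  then obtain b where b: "b1 \<le> b" "b \<le> b2" "left_idx b = right_idx b"
    by blast
  then have "b \<in> B"
    using G.index_convex[OF b1 b2] by blast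
  have "x (right_idx b2) - x (left_idx b1) \<le> y b2 - y b1"
    using x_right_idx_diff_le[OF \<open>b \<in> B\<close> b2 b(2)] x_left_idx_diff_le[OF b1 \<open>b \<in> B\<close> b(1)] b(3)
    by simp
  moreover have "G.cdf b2 - G.cdf (b1 - 1) \<le> F.cdf (right_idx b2) - F.cdf (left_idx b1 - 1)"
    using right_idx_cell(3)[OF b2] left_idx_cell(2)[OF b1] by simp
  ultimately show ?thesis
    using right_idx_cell(1)[OF b2] left_idx_cell(1)[OF b1] by blast
next
  case False
  then have "G.cdf b2 - G.cdf (b1 - 1) \<le> F.cdf (right_idx b2) - F.cdf (right_idx b1 - 1)"
    using G_mass_le_F_mass_of_separated[OF b1 b2 \<open>b1 \<le> b2\<close>] by blast
  then show ?thesis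
    using x_right_idx_diff_le[OF b1 b2 \<open>b1 \<le> b2\<close>] right_idx_cell(1)[OF b1] right_idx_cell(1)[OF b2]
    by blast
qed

lemma prob_G_Icc_le_conc:
  assumes "b1 \<in> B" "b2 \<in> B" "b1 \<le> b2" "y b2 - y b1 \<le> eps"
  shows "measure_pmf.prob G {y b1..y b2} \<le> conc F eps"
proof -
  obtain a a' where a: "a \<in> A" "a' \<in> A" "x a' - x a \<le> y b2 - y b1"
    and mass: "G.cdf b2 - G.cdf (b1 - 1) \<le> F.cdf a' - F.cdf (a - 1)"
    using exists_F_block_dominating[OF assms(1-3)] by blast
  have "measure_pmf.prob G {y b1..y b2} = G.cdf b2 - G.cdf (b1 - 1)"
    by (rule G.prob_Icc_eq[OF assms(1-3)])
  also have "\<dots> \<le> measure_pmf.prob F {x a..x a'}"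
    using mass F.cdf_diff_le_prob_Icc[OF a(1,2)] by linarith
  also have "\<dots> \<le> measure_pmf.prob F {x a..x a + eps}"
    using a(3) assms(4) by (intro measure_pmf.finite_measure_mono) auto
  also have "\<dots> \<le> conc F eps"
    by (rule prob_Icc_le_conc)
  finally show ?thesis .
qed

lemma prob_G_window_le_conc: "measure_pmf.prob G {z..z + eps} \<le> conc F eps"
proof (rule measure_pmf_le_of_finite_subsets)
  fix S assume S: "finite S" "S \<subseteq> {z..z + eps}"
  define J where "J = y -` S \<inter> B"
  have "finite J"
    unfolding J_def using S(1) G.inj_on_x by (rule finite_vimage_IntI)
  have "S \<inter> set_pmf G = y ` J"
    by (auto simp: J_def G.set_pmf_eq)
  then have prob_S: "measure_pmf.prob G S = measure_pmf.prob G (y ` J)"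
    by (metis measure_Int_set_pmf)
  show "measure_pmf.prob G S \<le> conc F eps"
  proof (cases "J = {}")
    case True
    then show ?thesis
      using prob_S order_trans[OF measure_nonneg prob_Icc_le_conc] by simp
  next
    case False
    define b1 b2 where "b1 = Min J" and "b2 = Max J"
    have J: "b1 \<in> J" "b2 \<in> J" "\<And>b. b \<in> J \<Longrightarrow> b1 \<le> b \<and> b \<le> b2"
      using \<open>finite J\<close> False by (auto simp: b1_def b2_def)
    then have b: "b1 \<in> B" "b2 \<in> B" "b1 \<le> b2"
      by (auto simp: J_def)
    have "y b1 \<in> {z..z + eps}" "y b2 \<in> {z..z + eps}"
      using J(1,2) S(2) by (auto simp: J_def)
    then have "y b2 - y b1 \<le> eps"
      by simp
    have "y ` J \<subseteq> {y b1..y b2}"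
      using J b G.x_le_iff by (auto simp: J_def)
    then have "measure_pmf.prob G (y ` J) \<le> measure_pmf.prob G {y b1..y b2}"
      by (rule measure_pmf.finite_measure_mono) simp
    also have "\<dots> \<le> conc F eps"
      using prob_G_Icc_le_conc[OF b] \<open>y b2 - y b1 \<le> eps\<close> .
    finally show ?thesis
      using prob_S by simp
  qed
qed

end

theorem theorem4p1:
  fixes F G :: "real pmf" and A B :: "int set" and x p y q :: "int \<Rightarrow> real"
  assumes "represents F A x p"
    and "represents G B y q"
    and "wedge_disc_le F A x p G B y q"
  shows "wd_le F G"
proof -
  interpret wedge_disc_pair F A x p G B y q
    using assms by (simp add: wedge_disc_pair_def wedge_disc_pair_axioms_def discrete_repr_def)
  show ?thesis
    unfolding wd_le_def conc_def[of G] by (auto intro!: cSUP_least prob_G_window_le_conc)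
qed

end
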